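(* Let $R$ be a commutative ring with $1\neq 0$ and $M$ a faithful prime $R$-module which is a comultiplication module satisfying the double annihilator condition (i.e., $M$ is $S$-strong comultiplication for $S=\{1\}$). If $N$ is a submodule of $M$ such that $N=(0:_M I)$ for some essential ideal $I$ of $R$, then $N$ is a small submodule of $M$.
   Context: All rings are commutative with $1\neq 0$ and all modules are unital. For an ideal $I$ of $R$, $(0:_M I)=\{m\in M: Im=0\}$; $\mathrm{Ann}_R(X)=\{r\in R: rX=0\}$; $M$ is faithful if $\mathrm{Ann}_R(M)=0$; $M$ is prime if $\mathrm{Ann}_R(L)=\mathrm{Ann}_R(M)$ for every nonzero submodule $L$ of $M$. $M$ is a comultiplication module if for each submodule $N$ of $M$ there is an ideal $I$ of $R$ with $N=(0:_M I)$. $M$ satisfies the double annihilator condition if $\mathrm{Ann}_R((0:_M I))\subseteq I$ for every ideal $I$ of $R$. An ideal $I$ is essential in $R$ if $I\cap J=0$ implies $J=0$ for ideals $J$; a submodule $N$ is small in $M$ if $M=N+L$ implies $L=M$. *)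

theory Defs
  imports "HOL-Algebra.Module" "HOL-Algebra.Ideal"
begin

definition ann_sub :: "('a, 'c) ring_scheme \<Rightarrow> ('a, 'b, 'd) module_scheme \<Rightarrow> 'a set \<Rightarrow> 'b set" where
  "ann_sub R M I = {m \<in> carrier M. \<forall>a\<in>I. a \<odot>\<^bsub>M\<^esub> m = \<zero>\<^bsub>M\<^esub>}"

definition Ann :: "('a, 'c) ring_scheme \<Rightarrow> ('a, 'b, 'd) module_scheme \<Rightarrow> 'b set \<Rightarrow> 'a set" where
  "Ann R M X = {r \<in> carrier R. \<forall>x\<in>X. r \<odot>\<^bsub>M\<^esub> x = \<zero>\<^bsub>M\<^esub>}"

definition faithful_module :: "('a, 'c) ring_scheme \<Rightarrow> ('a, 'b, 'd) module_scheme \<Rightarrow> bool" where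
  "faithful_module R M \<longleftrightarrow> Ann R M (carrier M) = {\<zero>\<^bsub>R\<^esub>}"

definition prime_module :: "('a, 'c) ring_scheme \<Rightarrow> ('a, 'b, 'd) module_scheme \<Rightarrow> bool" where
  "prime_module R M \<longleftrightarrow>
     (\<forall>L. submodule L R M \<and> L \<noteq> {\<zero>\<^bsub>M\<^esub>} \<longrightarrow> Ann R M L = Ann R M (carrier M))"

definition comultiplication_module :: "('a, 'c) ring_scheme \<Rightarrow> ('a, 'b, 'd) module_scheme \<Rightarrow> bool" where
  "comultiplication_module R M \<longleftrightarrow>
     (\<forall>N. submodule N R M \<longrightarrow> (\<exists>I. ideal I R \<and> N = ann_sub R M I))"

definition double_annihilator_condition :: "('a, 'c) ring_scheme \<Rightarrow> ('a, 'b, 'd) module_scheme \<Rightarrow> bool" where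
  "double_annihilator_condition R M \<longleftrightarrow>
     (\<forall>I. ideal I R \<longrightarrow> Ann R M (ann_sub R M I) \<subseteq> I)"

definition essential_ideal :: "'a set \<Rightarrow> ('a, 'c) ring_scheme \<Rightarrow> bool" where
  "essential_ideal I R \<longleftrightarrow> ideal I R \<and>
     (\<forall>J. ideal J R \<longrightarrow> I \<inter> J = {\<zero>\<^bsub>R\<^esub>} \<longrightarrow> J = {\<zero>\<^bsub>R\<^esub>})"

definition submodule_sum :: "('a, 'b, 'd) module_scheme \<Rightarrow> 'b set \<Rightarrow> 'b set \<Rightarrow> 'b set" where
  "submodule_sum M N L = {n \<oplus>\<^bsub>M\<^esub> l | n l. n \<in> N \<and> l \<in> L}"

definition small_submodule :: "'b set \<Rightarrow> ('a, 'c) ring_scheme \<Rightarrow> ('a, 'b, 'd) module_scheme \<Rightarrow> bool" where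
  "small_submodule N R M \<longleftrightarrow> submodule N R M \<and>
     (\<forall>L. submodule L R M \<longrightarrow> submodule_sum M N L = carrier M \<longrightarrow> L = carrier M)"

end

theory Submission
  imports Defs
begin

(* If N + L = M with N = (0 :_M I), then I \<inter> Ann(L) kills M, so by faithfulness it is zero
   and, I being essential, Ann(L) = 0.  Writing L = (0 :_M J) by the comultiplication property,
   J \<subseteq> Ann(L) = 0, hence L = M. *)

lemma (in module) ann_sub_submodule:
  assumes "I \<subseteq> carrier R"
  shows "submodule (ann_sub R M I) R M"
proof (rule submoduleI)
  show "ann_sub R M I \<subseteq> carrier M" by (auto simp: ann_sub_def)
  show "\<zero>\<^bsub>M\<^esub> \<in> ann_sub R M I" using assms by (auto simp: ann_sub_def)
next
  fix a assume "a \<in> ann_sub R M I"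
  then show "\<ominus>\<^bsub>M\<^esub> a \<in> ann_sub R M I"
    using assms by (auto simp: ann_sub_def smult_r_minus subsetD)
next
  fix a b assume "a \<in> ann_sub R M I" "b \<in> ann_sub R M I"
  then show "a \<oplus>\<^bsub>M\<^esub> b \<in> ann_sub R M I"
    using assms by (auto simp: ann_sub_def smult_r_distr subsetD)
next
  fix a x assume a: "a \<in> carrier R" and x: "x \<in> ann_sub R M I"
  have "b \<odot>\<^bsub>M\<^esub> (a \<odot>\<^bsub>M\<^esub> x) = \<zero>\<^bsub>M\<^esub>" if b: "b \<in> I" for b
  proof -
    have bc: "b \<in> carrier R" and xc: "x \<in> carrier M"
      using b x assms by (auto simp: ann_sub_def)
    have "b \<odot>\<^bsub>M\<^esub> (a \<odot>\<^bsub>M\<^esub> x) = a \<odot>\<^bsub>M\<^esub> (b \<odot>\<^bsub>M\<^esub> x)"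
      using a bc xc by (simp add: smult_assoc1[symmetric] R.m_comm)
    also have "\<dots> = \<zero>\<^bsub>M\<^esub>" using x b a by (auto simp: ann_sub_def)
    finally show ?thesis .
  qed
  then show "a \<odot>\<^bsub>M\<^esub> x \<in> ann_sub R M I"
    using a x by (auto simp: ann_sub_def)
qed

lemma (in module) Ann_ideal:
  assumes "X \<subseteq> carrier M"
  shows "ideal (Ann R M X) R"
proof (rule idealI)
  show "ring R" by (rule R.ring_axioms)
  show "subgroup (Ann R M X) (add_monoid R)"
  proof
    show "Ann R M X \<subseteq> carrier (add_monoid R)" by (auto simp: Ann_def)
    show "\<one>\<^bsub>add_monoid R\<^esub> \<in> Ann R M X" using assms by (auto simp: Ann_def)
  next
    fix x y assume "x \<in> Ann R M X" "y \<in> Ann R M X"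
    then show "x \<otimes>\<^bsub>add_monoid R\<^esub> y \<in> Ann R M X"
      using assms by (auto simp: Ann_def smult_l_distr subsetD)
  next
    fix x assume "x \<in> Ann R M X"
    then show "inv\<^bsub>add_monoid R\<^esub> x \<in> Ann R M X"
      using assms by (auto simp: Ann_def smult_l_minus subsetD a_inv_def[symmetric])
  qed
next
  fix a x assume a: "a \<in> Ann R M X" and x: "x \<in> carrier R"
  then show "x \<otimes>\<^bsub>R\<^esub> a \<in> Ann R M X"
    using assms by (auto simp: Ann_def smult_assoc1 subsetD)
  then show "a \<otimes>\<^bsub>R\<^esub> x \<in> Ann R M X"
    using a x by (auto simp: Ann_def R.m_comm)
qed

lemma (in module) Ann_inter_subset_Ann_submodule_sum:
  assumes "N \<subseteq> carrier M" "L \<subseteq> carrier M"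
  shows "Ann R M N \<inter> Ann R M L \<subseteq> Ann R M (submodule_sum M N L)"
  using assms by (auto simp: Ann_def submodule_sum_def smult_r_distr subsetD)

lemma subset_Ann_ann_sub:
  assumes "J \<subseteq> carrier R"
  shows "J \<subseteq> Ann R M (ann_sub R M J)"
  using assms by (auto simp: Ann_def ann_sub_def)

lemma ann_sub_eq_carrier:
  assumes "J \<subseteq> Ann R M (carrier M)"
  shows "ann_sub R M J = carrier M"
  using assms by (auto simp: Ann_def ann_sub_def)

lemma (in module) Ann_eq_zero_if_ann_sub_essential_plus_eq_carrier:
  assumes "faithful_module R M" "essential_ideal I R"
    and "L \<subseteq> carrier M" "submodule_sum M (ann_sub R M I) L = carrier M"
  shows "Ann R M L = {\<zero>\<^bsub>R\<^esub>}"
proof -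
  have I: "ideal I R" and Ic: "I \<subseteq> carrier R"
    using assms(2) by (auto simp: essential_ideal_def ideal_def additive_subgroup_def subgroup_def)
  have "I \<inter> Ann R M L \<subseteq> Ann R M (carrier M)"
    using Ann_inter_subset_Ann_submodule_sum[of "ann_sub R M I" L] subset_Ann_ann_sub[OF Ic]
      assms(3,4) by (auto simp: ann_sub_def)
  also have "\<dots> = {\<zero>\<^bsub>R\<^esub>}" using assms(1) by (simp add: faithful_module_def)
  finally have "I \<inter> Ann R M L = {\<zero>\<^bsub>R\<^esub>}"
    using I Ann_ideal[OF assms(3)] by (auto simp: ideal_def additive_subgroup.zero_closed)
  then show ?thesis
    using assms(2) Ann_ideal[OF assms(3)] by (simp add: essential_ideal_def)
qed

lemma (in module) submodule_eq_carrier_if_Ann_eq_zero: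
  assumes "faithful_module R M" "comultiplication_module R M"
    and "submodule L R M" "Ann R M L = {\<zero>\<^bsub>R\<^esub>}"
  shows "L = carrier M"
proof -
  obtain J where J: "ideal J R" "L = ann_sub R M J"
    using assms(2,3) by (auto simp: comultiplication_module_def)
  then have "J \<subseteq> carrier R"
    by (simp add: ideal_def additive_subgroup_def subgroup_def)
  then have "J \<subseteq> Ann R M (carrier M)"
    using subset_Ann_ann_sub[of J R M] J(2) assms(1,4) by (simp add: faithful_module_def)
  then show ?thesis using J(2) ann_sub_eq_carrier by metis
qed

theorem proposition2p4:
  fixes R :: "('a, 'c) ring_scheme" and M :: "('a, 'b, 'd) module_scheme"
  assumes "module R M"
    and "\<one>\<^bsub>R\<^esub> \<noteq> \<zero>\<^bsub>R\<^esub>"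
    and "faithful_module R M"
    and "prime_module R M"
    and "comultiplication_module R M"
    and "double_annihilator_condition R M"
    and "essential_ideal I R"
    and "N = ann_sub R M I"
  shows "small_submodule N R M"
proof -
  interpret module R M by fact
  have "I \<subseteq> carrier R"
    using assms(7) by (auto simp: essential_ideal_def ideal_def additive_subgroup_def subgroup_def)
  then have "submodule N R M" using ann_sub_submodule assms(8) by simp
  moreover have "L = carrier M"
    if L: "submodule L R M" and sum: "submodule_sum M N L = carrier M" for L
  proof -
    have "L \<subseteq> carrier M" using L submodule.axioms(1) subgroup.subset by fastforce
    then have "Ann R M L = {\<zero>\<^bsub>R\<^esub>}"
      using Ann_eq_zero_if_ann_sub_essential_plus_eq_carrier assms(3,7,8) sum by blast
    then show ?thesis using submodule_eq_carrier_if_Ann_eq_zero assms(3,5) L by blast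
  qed
  ultimately show ?thesis by (simp add: small_submodule_def)
qed

end
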